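(* Let $\Omega\subset\mathbb R^n$ be a $C^2$ domain, $x\in\partial\Omega$, and let $\mathbf e_1(x),\dots,\mathbf e_{n-1}(x)$ be an orthonormal eigenbasis of the shape operator of $\partial\Omega$ at $x$ with principal curvatures $\kappa_1(x),\dots,\kappa_{n-1}(x)$, i.e. $\partial_{\mathbf e_j(x)}\nu(x)=\kappa_j(x)\mathbf e_j(x)$. Then for every $u\in F$ with $\mathbb B(\nu(x))u=0$, $$\langle u,L_B(x)u\rangle=\sum_{j=1}^{n-1}\kappa_j(x)\,|\mathbb B(\mathbf e_j(x))u|^2 .$$
   Context: $E,F$ are finite-dimensional real or complex inner product spaces ($\langle\cdot,\cdot\rangle$ the real part of the inner product in the complex case). $B_1,\dots,B_n\in\mathcal L(F,E)$, $\mathbb B(\xi)=\sum_j\xi_jB_j$ for $\xi\in\mathbb R^n$, $e_1,\dots,e_n$ the standard basis. $\nu$ is the outward unit normal of $\Omega$, $N$ any $C^1$ extension of $\nu$ to a neighbourhood of $\partial\Omega$, and $L_B(x):=\sum_{j=1}^n\mathbb B(e_j)^*\mathbb B(\partial_jN(x))$ (generalized Levi matrix). *)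

theory Defs
  imports "HOL-Analysis.Analysis"
begin

definition C1_on :: "(real^'n \<Rightarrow> 'b::real_normed_vector) \<Rightarrow> (real^'n) set \<Rightarrow> bool" where
  "C1_on f S \<longleftrightarrow> f differentiable_on S \<and>
     (\<forall>i. continuous_on S (\<lambda>y. frechet_derivative f (at y) (axis i 1)))"

definition local_defining_function ::
  "(real^'n) set \<Rightarrow> real^'n \<Rightarrow> real \<Rightarrow> (real^'n \<Rightarrow> real) \<Rightarrow> (real^'n \<Rightarrow> real^'n) \<Rightarrow> bool" where
  "local_defining_function \<Omega> p r \<rho> g \<longleftrightarrow>
     0 < r \<and>
     (\<forall>y\<in>ball p r. (\<rho> has_derivative (\<lambda>h. g y \<bullet> h)) (at y)) \<and>
     C1_on g (ball p r) \<and>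
     (\<forall>y\<in>ball p r. g y \<noteq> 0) \<and>
     \<Omega> \<inter> ball p r = {y \<in> ball p r. \<rho> y < 0}"

definition C2_domain :: "(real^'n) set \<Rightarrow> bool" where
  "C2_domain \<Omega> \<longleftrightarrow> open \<Omega> \<and> connected \<Omega> \<and> \<Omega> \<noteq> {} \<and>
     (\<forall>p\<in>frontier \<Omega>. \<exists>r \<rho> g. local_defining_function \<Omega> p r \<rho> g)"

definition outward_unit_normal :: "(real^'n) set \<Rightarrow> (real^'n \<Rightarrow> real^'n) \<Rightarrow> bool" where
  "outward_unit_normal \<Omega> \<nu> \<longleftrightarrow>
     (\<forall>p\<in>frontier \<Omega>. \<exists>r \<rho> g. local_defining_function \<Omega> p r \<rho> g \<and>
        \<nu> p = (1 / norm (g p)) *\<^sub>R g p)"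

definition normal_C1_extension ::
  "(real^'n) set \<Rightarrow> (real^'n \<Rightarrow> real^'n) \<Rightarrow> (real^'n \<Rightarrow> real^'n) \<Rightarrow> bool" where
  "normal_C1_extension \<Omega> \<nu> N \<longleftrightarrow>
     (\<exists>U. open U \<and> frontier \<Omega> \<subseteq> U \<and> C1_on N U \<and>
          (\<forall>p\<in>frontier \<Omega>. N p = \<nu> p))"

definition Bsym :: "('n::finite \<Rightarrow> 'f \<Rightarrow> 'e::real_vector) \<Rightarrow> real^'n \<Rightarrow> 'f \<Rightarrow> 'e" where
  "Bsym B \<xi> = (\<lambda>u. \<Sum>j\<in>UNIV. (\<xi> $ j) *\<^sub>R B j u)"

definition levi_B ::
  "('n::finite \<Rightarrow> 'f::real_inner \<Rightarrow> 'e::real_inner) \<Rightarrow> (real^'n \<Rightarrow> real^'n) \<Rightarrow> real^'n \<Rightarrow> 'f \<Rightarrow> 'f" where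
  "levi_B B N x = (\<lambda>u. \<Sum>j\<in>UNIV.
      adjoint (Bsym B (axis j 1)) (Bsym B (frechet_derivative N (at x) (axis j 1)) u))"

end

theory Submission
  imports Defs
begin

text \<open>
  The quadratic form u \<mapsto> \<langle>u, L_B(x) u\<rangle> is the trace of the bilinear form
  (a, b) \<mapsto> \<langle>B(a) u, B(dN(x) b) u\<rangle>, and a trace can be computed in any orthonormal basis.
  In the basis e_1, ..., e_(n-1), \<nu>(x) the tangential terms are \<kappa>_j |B(e_j) u|^2, because dN(x)
  agrees on tangent vectors with the derivative of \<nu> along the boundary, and the normal term
  vanishes since B(\<nu>(x)) u = 0.
\<close>

definition orthonormal_on :: "'i set \<Rightarrow> ('i \<Rightarrow> 'a::real_inner) \<Rightarrow> bool" where
  "orthonormal_on I f \<longleftrightarrow> (\<forall>i\<in>I. \<forall>j\<in>I. f i \<bullet> f j = (if i = j then 1 else 0))"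

lemma orthonormal_on_expansion:
  fixes f :: "'i \<Rightarrow> 'a::euclidean_space"
  assumes on: "orthonormal_on I f" and fin: "finite I" and card: "card I = DIM('a)"
  shows "v = (\<Sum>a\<in>I. (v \<bullet> f a) *\<^sub>R f a)"
proof (rule ccontr)
  define w where "w = v - (\<Sum>a\<in>I. (v \<bullet> f a) *\<^sub>R f a)"
  assume "v \<noteq> (\<Sum>a\<in>I. (v \<bullet> f a) *\<^sub>R f a)"
  hence "w \<noteq> 0" by (simp add: w_def)
  have w_orth: "w \<bullet> f b = 0" if "b \<in> I" for b
  proof -
    have "(\<Sum>a\<in>I. (v \<bullet> f a) *\<^sub>R f a) \<bullet> f b = (\<Sum>a\<in>I. if a = b then v \<bullet> f b else 0)"
      using on that unfolding orthonormal_on_def by (auto simp: inner_sum_left intro: sum.cong)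
    also have "\<dots> = v \<bullet> f b" using fin that by simp
    finally show ?thesis by (simp add: w_def inner_diff_left)
  qed
  have inj: "inj_on f I"
    using on unfolding orthonormal_on_def inj_on_def by (metis one_neq_zero)
  have w_new: "w \<notin> f ` I"
    using on w_orth unfolding orthonormal_on_def by (auto, metis one_neq_zero)
  define S where "S = insert w (f ` I)"
  have "pairwise orthogonal S"
    using w_orth on unfolding S_def pairwise_def orthogonal_def orthonormal_on_def
    by (auto simp: inner_commute)
  moreover have "0 \<notin> S"
    using \<open>w \<noteq> 0\<close> on unfolding S_def orthonormal_on_def by (auto, metis inner_zero_left zero_neq_one)
  ultimately have "card S \<le> DIM('a)"
    using pairwise_orthogonal_independent independent_bound by blast
  moreover have "card S = card I + 1"
    unfolding S_def using w_new fin inj by (simp add: card_image)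
  ultimately show False using card by simp
qed

lemma orthonormal_on_parseval:
  fixes f :: "'i \<Rightarrow> 'a::euclidean_space"
  assumes "orthonormal_on I f" "finite I" "card I = DIM('a)"
  shows "v \<bullet> w = (\<Sum>a\<in>I. (v \<bullet> f a) * (w \<bullet> f a))"
  by (subst orthonormal_on_expansion[OF assms, of w])
     (simp add: inner_sum_right mult.commute)

lemma bilinear_trace_orthonormal_on:
  fixes \<Phi> :: "'a::euclidean_space \<Rightarrow> 'a \<Rightarrow> real"
  assumes \<Phi>: "bilinear \<Phi>"
    and f: "orthonormal_on I f" "finite I" "card I = DIM('a)"
    and g: "orthonormal_on J g" "finite J" "card J = DIM('a)"
  shows "(\<Sum>j\<in>J. \<Phi> (g j) (g j)) = (\<Sum>a\<in>I. \<Phi> (f a) (f a))"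
proof -
  have "\<Phi> (g j) (g j) = (\<Sum>a\<in>I. \<Sum>b\<in>I. ((g j \<bullet> f a) * (g j \<bullet> f b)) * \<Phi> (f a) (f b))" for j
    by (subst (1 2) orthonormal_on_expansion[OF f, of "g j"])
       (simp add: bilinear_sum[OF \<Phi>] bilinear_lmul[OF \<Phi>] bilinear_rmul[OF \<Phi>]
         sum.cartesian_product mult.assoc, rule sum.cong; auto)
  hence "(\<Sum>j\<in>J. \<Phi> (g j) (g j))
      = (\<Sum>j\<in>J. \<Sum>a\<in>I. \<Sum>b\<in>I. ((g j \<bullet> f a) * (g j \<bullet> f b)) * \<Phi> (f a) (f b))"
    by simp
  also have "\<dots> = (\<Sum>a\<in>I. \<Sum>b\<in>I. \<Sum>j\<in>J. ((g j \<bullet> f a) * (g j \<bullet> f b)) * \<Phi> (f a) (f b))"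
    by (subst sum.swap, rule sum.cong[OF refl], rule sum.swap)
  also have "\<dots> = (\<Sum>a\<in>I. \<Sum>b\<in>I. (f a \<bullet> f b) * \<Phi> (f a) (f b))"
  proof -
    have "(\<Sum>j\<in>J. (g j \<bullet> f a) * (g j \<bullet> f b)) = f a \<bullet> f b" for a b
      unfolding orthonormal_on_parseval[OF g, of "f a" "f b"] by (simp add: inner_commute)
    thus ?thesis by (simp add: sum_distrib_right[symmetric])
  qed
  also have "\<dots> = (\<Sum>a\<in>I. \<Sum>b\<in>I. if b = a then \<Phi> (f a) (f b) else 0)"
    using f(1) unfolding orthonormal_on_def by (intro sum.cong refl) auto
  also have "\<dots> = (\<Sum>a\<in>I. \<Phi> (f a) (f a))"
    using f(2) by simp
  finally show ?thesis .
qed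

lemma orthonormal_on_axis: "orthonormal_on UNIV (\<lambda>j. axis j (1::real))"
  by (simp add: orthonormal_on_def inner_axis_axis)

lemma Bsym_add: "Bsym B (\<xi> + \<eta>) u = Bsym B \<xi> u + Bsym B \<eta> u"
  by (simp add: Bsym_def sum.distrib scaleR_add_left)

lemma Bsym_scaleR: "Bsym B (c *\<^sub>R \<xi>) u = c *\<^sub>R Bsym B \<xi> u"
  by (simp add: Bsym_def scaleR_sum_right)

lemma linear_Bsym:
  assumes "\<And>j. linear (B j)"
  shows "linear (Bsym B \<xi>)"
  unfolding Bsym_def
  using assms by (intro linearI)
    (auto simp: linear_add linear_scale scaleR_add_right sum.distrib scaleR_sum_right mult.commute)

lemma inner_levi_B:
  fixes B :: "'n::finite \<Rightarrow> 'f::euclidean_space \<Rightarrow> 'e::euclidean_space"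
  assumes "\<And>j. linear (B j)"
  shows "u \<bullet> levi_B B N x u =
    (\<Sum>j\<in>UNIV. Bsym B (axis j 1) u \<bullet> Bsym B (frechet_derivative N (at x) (axis j 1)) u)"
proof -
  have lin: "linear (Bsym B \<xi>)" for \<xi>
    using assms by (rule linear_Bsym)
  show ?thesis
    unfolding levi_B_def by (simp add: inner_sum_right adjoint_works[OF lin])
qed

lemma outward_unit_normal_inner_self:
  assumes "outward_unit_normal \<Omega> \<nu>" "x \<in> frontier \<Omega>"
  shows "\<nu> x \<bullet> \<nu> x = 1"
proof -
  obtain r \<rho> g where "local_defining_function \<Omega> x r \<rho> g" "\<nu> x = (1 / norm (g x)) *\<^sub>R g x"
    using assms unfolding outward_unit_normal_def by blast
  moreover from this have "g x \<noteq> 0"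
    unfolding local_defining_function_def by auto
  ultimately show ?thesis by (simp add: dot_square_norm)
qed

lemma normal_C1_extension_has_derivative:
  assumes "normal_C1_extension \<Omega> \<nu> N" "x \<in> frontier \<Omega>"
  shows "(\<nu> has_derivative frechet_derivative N (at x)) (at x within frontier \<Omega>)"
proof -
  obtain U where U: "open U" "frontier \<Omega> \<subseteq> U" "C1_on N U" "\<forall>p\<in>frontier \<Omega>. N p = \<nu> p"
    using assms(1) unfolding normal_C1_extension_def by blast
  have "N differentiable (at x)"
    using U assms(2) unfolding C1_on_def
    by (meson differentiable_on_eq_differentiable_at subsetD)
  hence "(N has_derivative frechet_derivative N (at x)) (at x within frontier \<Omega>)"
    by (simp add: frechet_derivative_works has_derivative_at_withinI)
  thus ?thesis
    by (rule has_derivative_transform_within[OF _ zero_less_one assms(2)]) (use U in auto)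
qed

theorem mainTheorem7:
  fixes \<Omega> :: "(real^'n) set"
    and \<nu> N :: "real^'n \<Rightarrow> real^'n"
    and B :: "'n \<Rightarrow> 'f::euclidean_space \<Rightarrow> 'e::euclidean_space"
    and x :: "real^'n"
    and e :: "nat \<Rightarrow> real^'n"
    and \<kappa> :: "nat \<Rightarrow> real"
    and u :: 'f
  assumes "C2_domain \<Omega>"
    and "outward_unit_normal \<Omega> \<nu>"
    and "normal_C1_extension \<Omega> \<nu> N"
    and "\<And>j. linear (B j)"
    and "x \<in> frontier \<Omega>"
    and "\<forall>i<CARD('n) - 1. \<forall>j<CARD('n) - 1. e i \<bullet> e j = (if i = j then 1 else 0)"
    and "\<forall>j<CARD('n) - 1. e j \<bullet> \<nu> x = 0"
    and "\<forall>D. (\<nu> has_derivative D) (at x within frontier \<Omega>) \<longrightarrow>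
           (\<forall>j<CARD('n) - 1. D (e j) = \<kappa> j *\<^sub>R e j)"
    and "Bsym B (\<nu> x) u = 0"
  shows "u \<bullet> levi_B B N x u = (\<Sum>j<CARD('n) - 1. \<kappa> j * (norm (Bsym B (e j) u))\<^sup>2)"
proof -
  define m where "m = CARD('n) - 1"
  have card: "CARD('n) = Suc m"
    unfolding m_def using zero_less_card_finite[where 'a='n] by simp
  define M where "M = frechet_derivative N (at x)"
  have dN: "(\<nu> has_derivative M) (at x within frontier \<Omega>)"
    unfolding M_def using assms(3,5) by (rule normal_C1_extension_has_derivative)
  have M_e: "M (e j) = \<kappa> j *\<^sub>R e j" if "j < m" for j
    using assms(8) dN that unfolding m_def by blast
  define f where "f i = (if i < m then e i else \<nu> x)" for i
  have f: "orthonormal_on {..<Suc m} f"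
    using assms(6,7) outward_unit_normal_inner_self[OF assms(2,5)]
    unfolding orthonormal_on_def f_def m_def by (auto simp: inner_commute less_Suc_eq)
  define \<Phi> where "\<Phi> a b = Bsym B a u \<bullet> Bsym B (M b) u" for a b
  have "bilinear \<Phi>"
    using has_derivative_linear[OF dN] unfolding bilinear_def \<Phi>_def
    by (auto intro!: linearI simp: linear_add linear_scale Bsym_add Bsym_scaleR
        inner_add_left inner_add_right)
  have "u \<bullet> levi_B B N x u = (\<Sum>j\<in>UNIV. \<Phi> (axis j 1) (axis j 1))"
    by (simp add: inner_levi_B assms(4) \<Phi>_def M_def)
  also have "\<dots> = (\<Sum>a<Suc m. \<Phi> (f a) (f a))"
    by (rule bilinear_trace_orthonormal_on[OF \<open>bilinear \<Phi>\<close> f _ _ orthonormal_on_axis])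
       (simp_all add: card)
  also have "\<dots> = (\<Sum>j<m. \<Phi> (e j) (e j))"
    using assms(9) by (simp add: \<Phi>_def f_def)
  also have "\<dots> = (\<Sum>j<m. \<kappa> j * (norm (Bsym B (e j) u))\<^sup>2)"
    by (simp add: \<Phi>_def M_e Bsym_scaleR power2_norm_eq_inner)
  finally show ?thesis unfolding m_def .
qed

end
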